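(* Let $0<q<1$, $n,m\in\mathbb{N}_0$, and let $x,y$ be complex with $y\neq0$. Then $${}_2\Phi_1\left[\begin{matrix}q^{-n},x;\\ y;\end{matrix}\;q;\,q^{1+m}\right]=\frac{x^n\left(\frac{y}{x};q\right)_n}{(y;q)_n}\sum_{j=0}^m\begin{bmatrix}m\\ j\end{bmatrix}_q\frac{\left(\frac{q^{1-n}}{y},\frac{qx}{y};q\right)_{m-j}}{\left(\frac{xq^{1-n}}{y};q\right)_{m-j}}\left(\frac{q}{y}\right)^j.$$
   Context: Throughout $0<q<1$. For complex $\alpha$: $(\alpha;q)_0=1$, $(\alpha;q)_n=\prod_{k=0}^{n-1}(1-\alpha q^k)$, $(\alpha_1,\dots,\alpha_m;q)_n=(\alpha_1;q)_n\cdots(\alpha_m;q)_n$. The $q$-binomial coefficient is $\begin{bmatrix}m\\ j\end{bmatrix}_q=\frac{(q;q)_m}{(q;q)_j(q;q)_{m-j}}$. Also ${}_2\Phi_1\left[\begin{matrix}a_1,a_2;\\ b_1;\end{matrix}\,q;z\right]=\sum_{k=0}^\infty\frac{(a_1,a_2;q)_k}{(b_1;q)_k}\frac{z^k}{(q;q)_k}$ (terminating when $a_1=q^{-n}$). *)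

theory Defs
  imports Complex_Main
begin

definition qpoch :: "complex \<Rightarrow> complex \<Rightarrow> nat \<Rightarrow> complex" where
  "qpoch a q n = (\<Prod>k<n. 1 - a * q ^ k)"

definition qbinom :: "complex \<Rightarrow> nat \<Rightarrow> nat \<Rightarrow> complex" where
  "qbinom q m j = qpoch q q m / (qpoch q q j * qpoch q q (m - j))"

definition phi21 :: "complex \<Rightarrow> complex \<Rightarrow> complex \<Rightarrow> complex \<Rightarrow> complex \<Rightarrow> complex" where
  "phi21 a1 a2 b1 q z =
     (\<Sum>k. qpoch a1 q k * qpoch a2 q k / qpoch b1 q k * z ^ k / qpoch q q k)"

end

theory Submission
  imports Defs
begin

text \<open>
  Since (q^-n; q)_k vanishes for k > n, the series terminates, and its k-th term carries the
  factor (q^k)^m. Expanding u^m, u = q^k, by the q-binomial theorem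
  u^m = sum_j [m, j]_q t^j (u - t)(u - t q)...(u - t q^(m-j-1)) with t = q/y and
  interchanging the sums, each inner sum over k becomes a q-Chu-Vandermonde sum once the
  product is rewritten as a q-shifted factorial in y q^(k-m+j). That sum is evaluated in the
  polynomial form sum_k c_k (b; q)_k (c q^k; q)_(n-k) = prod_(i<n) (b - c q^i), which needs
  no non-vanishing hypotheses and follows by induction on n and summation by parts.
\<close>

lemma prod_lessThan_add:
  fixes m n :: nat
  shows "(\<Prod>i<m + n. f i) = (\<Prod>i<m. f i) * (\<Prod>i<n. f (m + i))"
  by (induction n) (simp_all add: mult.assoc)

lemma qpoch_0 [simp]: "qpoch a q 0 = 1"
  by (simp add: qpoch_def)

lemma qpoch_Suc: "qpoch a q (Suc n) = qpoch a q n * (1 - a * q ^ n)"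
  by (simp add: qpoch_def)

lemma qpoch_rec: "qpoch a q (Suc n) = (1 - a) * qpoch (a * q) q n"
  unfolding qpoch_def by (subst prod.lessThan_Suc_shift) (simp add: mult.assoc)

lemma qpoch_add: "qpoch a q (m + n) = qpoch a q m * qpoch (a * q ^ m) q n"
  unfolding qpoch_def prod_lessThan_add by (simp add: power_add mult.assoc)

lemma qpoch_inverse_power_eq_0:
  assumes "q \<noteq> 0" "n < k"
  shows "qpoch (inverse (q ^ n)) q k = 0"
  unfolding qpoch_def using assms by (intro prod_zero) (auto intro!: bexI[of _ n])

lemma qpoch_self_nonzero:
  assumes "norm q < 1"
  shows "qpoch q q k \<noteq> 0"
proof -
  have "q * q ^ i \<noteq> 1" for i
  proof
    assume "q * q ^ i = 1"
    then have "norm q ^ Suc i = 1"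
      by (metis norm_one norm_power power_Suc)
    moreover have "norm q ^ Suc i < 1"
      using assms by (metis norm_ge_zero power_less_one_iff zero_less_Suc)
    ultimately show False
      by simp
  qed
  then show ?thesis
    unfolding qpoch_def by (simp add: prod_zero_iff)
qed

lemma power_mult_qpoch:
  "x \<noteq> 0 \<Longrightarrow> x ^ n * qpoch (y / x) q n = (\<Prod>i<n. x - y * q ^ i)"
  unfolding qpoch_def by (induction n) (simp_all add: field_simps)

lemma prod_diff_eq_qpoch_reverse:
  assumes "a \<noteq> 0" "q \<noteq> 0"
  shows "(\<Prod>i<n. x - a * q ^ i) = (\<Prod>i<n. - (a * q ^ i)) * qpoch (x * q / (a * q ^ n)) q n"
proof (induction n)
  case (Suc n)
  have "x - a * q ^ n = - (a * q ^ n) * (1 - x * q / (a * q ^ Suc n))"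
    using assms by (simp add: field_simps)
  moreover have "x * q / (a * q ^ Suc n) * q = x * q / (a * q ^ n)"
    using assms by (simp add: field_simps)
  ultimately show ?case
    using Suc by (simp add: qpoch_rec mult_ac)
qed simp

lemma prod_diff_qpoch_shift:
  assumes "q \<noteq> 0" "y \<noteq> 0"
  shows "(q ^ n) ^ M * (\<Prod>i<n. x - y / q ^ M * q ^ i) * qpoch (x * (q / q ^ n) / y) q M =
         (\<Prod>i<n. x - y * q ^ i) * qpoch (q * x / y) q M"
proof -
  define a where "a = y / q ^ M"
  define D where "D = (\<Prod>i<M. - (a * q ^ i))"
  have a: "a \<noteq> 0" "a * q ^ M = y"
    using assms by (simp_all add: a_def)
  have "(\<Prod>i<n + M. x - a * q ^ i) = (\<Prod>i<n. x - a * q ^ i) * (\<Prod>i<M. x - a * q ^ n * q ^ i)"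
    by (simp add: prod_lessThan_add power_add mult.assoc)
  also have "(\<Prod>i<M. x - a * q ^ n * q ^ i) = (q ^ n) ^ M * D * qpoch (x * (q / q ^ n) / y) q M"
  proof -
    have "(\<Prod>i<M. - (a * q ^ n * q ^ i)) = (\<Prod>i<M. q ^ n * - (a * q ^ i))"
      by (simp add: mult_ac)
    also have "\<dots> = (q ^ n) ^ M * D"
      unfolding prod.distrib D_def by simp
    finally have factor: "(\<Prod>i<M. - (a * q ^ n * q ^ i)) = (q ^ n) ^ M * D" .
    have arg: "x * q / (a * q ^ n * q ^ M) = x * (q / q ^ n) / y"
      using a by (simp add: field_simps)
    have "(\<Prod>i<M. x - a * q ^ n * q ^ i) =
        (\<Prod>i<M. - (a * q ^ n * q ^ i)) * qpoch (x * q / (a * q ^ n * q ^ M)) q M"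
      by (rule prod_diff_eq_qpoch_reverse) (use assms a in simp_all)
    then show ?thesis
      unfolding factor arg .
  qed
  finally have split_left: "(\<Prod>i<n + M. x - a * q ^ i) =
      D * ((q ^ n) ^ M * (\<Prod>i<n. x - a * q ^ i) * qpoch (x * (q / q ^ n) / y) q M)"
    by (simp only: mult_ac)
  have "(\<Prod>i<n + M. x - a * q ^ i) = (\<Prod>i<M. x - a * q ^ i) * (\<Prod>i<n. x - a * q ^ M * q ^ i)"
    by (subst add.commute) (simp add: prod_lessThan_add power_add mult.assoc)
  also have "\<dots> = D * ((\<Prod>i<n. x - y * q ^ i) * qpoch (q * x / y) q M)"
    using prod_diff_eq_qpoch_reverse[where a=a and q=q and n=M] assms a by (simp add: D_def mult_ac)
  finally have "D * ((q ^ n) ^ M * (\<Prod>i<n. x - a * q ^ i) * qpoch (x * (q / q ^ n) / y) q M) =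
      D * ((\<Prod>i<n. x - y * q ^ i) * qpoch (q * x / y) q M)"
    unfolding split_left .
  moreover have "D \<noteq> 0"
    using a assms by (simp add: D_def)
  ultimately show ?thesis
    by (simp add: a_def)
qed

lemma summation_by_parts_atMost:
  fixes a w :: "nat \<Rightarrow> 'a::comm_ring"
  shows "(\<Sum>k\<le>n. a k * (w k - w (Suc k))) =
    a 0 * w 0 - a (Suc n) * w (Suc n) + (\<Sum>k\<le>n. (a (Suc k) - a k) * w (Suc k))"
  by (induction n) (simp_all add: algebra_simps)

text \<open>The coefficients of the terminating series 2Phi1(q^-n, b; c; q, q), without (b; q)_k / (c; q)_k.\<close>

definition qchu_coeff :: "complex \<Rightarrow> nat \<Rightarrow> nat \<Rightarrow> complex" where
  "qchu_coeff q n k = qpoch (inverse (q ^ n)) q k * q ^ k / qpoch q q k"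

lemma qchu_coeff_0 [simp]: "qchu_coeff q n 0 = 1"
  by (simp add: qchu_coeff_def)

lemma qchu_coeff_eq_0: "q \<noteq> 0 \<Longrightarrow> n < k \<Longrightarrow> qchu_coeff q n k = 0"
  by (simp add: qchu_coeff_def qpoch_inverse_power_eq_0)

lemma qchu_coeff_Suc_Suc:
  assumes "q \<noteq> 0" "qpoch q q (Suc k) \<noteq> 0"
  shows "qchu_coeff q (Suc n) (Suc k) = qchu_coeff q n (Suc k) / q ^ Suc k - qchu_coeff q n k / q ^ k"
proof -
  have "inverse (q ^ Suc n) * q = inverse (q ^ n)"
    using assms(1) by (simp add: field_simps)
  moreover have "qpoch q q k \<noteq> 0" "1 - q * q ^ k \<noteq> 0"
    using assms(2) by (simp_all add: qpoch_Suc)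
  ultimately show ?thesis
    unfolding qchu_coeff_def qpoch_rec[of "inverse (q ^ Suc n)"] qpoch_Suc[of "inverse (q ^ n)"]
      qpoch_Suc[of q q k]
    using assms(1) by (simp add: field_simps)
qed

lemma qpoch_mult_qpoch_diff:
  assumes "k \<le> n"
  shows "qpoch b q k * qpoch (c * q ^ k) q (Suc n - k) - qpoch b q (Suc k) * qpoch (c * q ^ Suc k) q (n - k)
    = q ^ k * (b - c) * qpoch b q k * qpoch (c * q * q ^ k) q (n - k)"
proof -
  have "Suc n - k = Suc (n - k)"
    using assms by simp
  then show ?thesis
    unfolding qpoch_Suc[of b] by (simp add: qpoch_rec[of "c * q ^ k"] algebra_simps)
qed

theorem q_Chu_Vandermonde:
  assumes "q \<noteq> 0" "\<And>k. qpoch q q k \<noteq> 0"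
  shows "(\<Sum>k\<le>n. qchu_coeff q n k * qpoch b q k * qpoch (c * q ^ k) q (n - k)) =
    (\<Prod>i<n. b - c * q ^ i)"
proof (induction n arbitrary: c)
  case (Suc n)
  define w where "w k = qpoch b q k * qpoch (c * q ^ k) q (Suc n - k)" for k
  define a where "a k = qchu_coeff q n k / q ^ k" for k
  have "(\<Prod>i<Suc n. b - c * q ^ i) = (b - c) * (\<Prod>i<n. b - c * q * q ^ i)"
    by (subst prod.lessThan_Suc_shift) (simp add: mult_ac)
  also have "\<dots> = (\<Sum>k\<le>n. a k * (w k - w (Suc k)))"
    unfolding Suc.IH[symmetric] sum_distrib_left
  proof (intro sum.cong refl)
    fix k
    assume "k \<in> {..n}"
    then have "w k - w (Suc k) = q ^ k * (b - c) * qpoch b q k * qpoch (c * q * q ^ k) q (n - k)"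
      using qpoch_mult_qpoch_diff[of k n b q c] by (simp add: w_def mult.assoc)
    then show "(b - c) * (qchu_coeff q n k * qpoch b q k * qpoch (c * q * q ^ k) q (n - k)) =
        a k * (w k - w (Suc k))"
      using assms(1) by (simp add: a_def)
  qed
  also have "\<dots> = w 0 + (\<Sum>k\<le>n. (a (Suc k) - a k) * w (Suc k))"
    unfolding summation_by_parts_atMost by (simp add: a_def qchu_coeff_eq_0 assms(1))
  also have "\<dots> = (\<Sum>k\<le>Suc n. qchu_coeff q (Suc n) k * w k)"
    by (simp add: sum.atMost_Suc_shift a_def qchu_coeff_Suc_Suc assms del: sum.atMost_Suc)
  finally show ?case
    by (simp add: w_def mult.assoc)
qed simp

lemma qbinom_0: "qpoch q q m \<noteq> 0 \<Longrightarrow> qbinom q m 0 = 1"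
  by (simp add: qbinom_def)

lemma qbinom_self: "qpoch q q m \<noteq> 0 \<Longrightarrow> qbinom q m m = 1"
  by (simp add: qbinom_def)

text \<open>The bound l < m matters: qbinom q m (Suc m) is not 0, as m - Suc m truncates to 0.\<close>

lemma qbinom_Suc_Suc:
  assumes "\<And>k. qpoch q q k \<noteq> 0" "l < m"
  shows "qbinom q (Suc m) (Suc l) = qbinom q m (Suc l) + q ^ (m - l) * qbinom q m l"
proof -
  obtain d where m: "m = Suc (l + d)"
    using assms(2) less_iff_Suc_add by blast
  define u where "u = q ^ Suc l"
  define v where "v = q ^ Suc d"
  have L: "qpoch q q (Suc l) = qpoch q q l * (1 - u)" and D: "qpoch q q (Suc d) = qpoch q q d * (1 - v)"
    and M: "qpoch q q (Suc m) = qpoch q q m * (1 - u * v)"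
    by (simp_all add: qpoch_Suc u_def v_def m power_add)
  have "1 - u \<noteq> 0" "1 - v \<noteq> 0" "qpoch q q l \<noteq> 0" "qpoch q q d \<noteq> 0"
    using assms(1)[of "Suc l"] assms(1)[of "Suc d"] assms(1) by (auto simp: L D)
  moreover have "m - Suc l = d" "Suc m - Suc l = Suc d" "q ^ (m - l) = v"
    by (simp_all add: m v_def Suc_diff_le)
  ultimately show ?thesis
    unfolding qbinom_def by (simp add: L D M divide_simps) (simp add: algebra_simps)
qed

theorem power_qbinomial_expansion:
  assumes "\<And>k. qpoch q q k \<noteq> 0"
  shows "u ^ m = (\<Sum>j\<le>m. qbinom q m j * t ^ j * (\<Prod>i<m - j. u - t * q ^ i))"
proof (induction m)
  case 0
  then show ?case
    using assms by (simp add: qbinom_0)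
next
  case (Suc m)
  define p where "p r = (\<Prod>i<r. u - t * q ^ i)" for r
  have "u ^ Suc m = (\<Sum>j\<le>m. qbinom q m j * t ^ j * (u * p (m - j)))"
    using Suc.IH by (simp add: p_def sum_distrib_left mult_ac)
  also have "\<dots> = (\<Sum>j\<le>m. qbinom q m j * t ^ j * p (Suc m - j)) +
      (\<Sum>j\<le>m. q ^ (m - j) * qbinom q m j * t ^ Suc j * p (m - j))"
    unfolding sum.distrib[symmetric] by (intro sum.cong refl) (simp add: p_def Suc_diff_le algebra_simps)
  also have "(\<Sum>j\<le>m. qbinom q m j * t ^ j * p (Suc m - j)) =
      p (Suc m) + (\<Sum>j<m. qbinom q m (Suc j) * t ^ Suc j * p (m - j))"
    by (simp add: sum.atMost_shift qbinom_0 assms)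
  also have "(\<Sum>j\<le>m. q ^ (m - j) * qbinom q m j * t ^ Suc j * p (m - j)) =
      (\<Sum>j<m. q ^ (m - j) * qbinom q m j * t ^ Suc j * p (m - j)) + t ^ Suc m"
    by (simp add: lessThan_Suc_atMost[symmetric] qbinom_self assms p_def del: power_Suc)
  also have "p (Suc m) + (\<Sum>j<m. qbinom q m (Suc j) * t ^ Suc j * p (m - j)) +
      ((\<Sum>j<m. q ^ (m - j) * qbinom q m j * t ^ Suc j * p (m - j)) + t ^ Suc m) =
      p (Suc m) + (\<Sum>j<m. (qbinom q m (Suc j) + q ^ (m - j) * qbinom q m j) * t ^ Suc j * p (m - j)) +
      t ^ Suc m"
    by (simp add: sum.distrib distrib_right)
  also have "\<dots> = (\<Sum>j\<le>Suc m. qbinom q (Suc m) j * t ^ j * p (Suc m - j))"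
    unfolding sum.atMost_Suc sum.atMost_shift
    by (simp add: qbinom_0 qbinom_self qbinom_Suc_Suc assms p_def del: power_Suc)
  finally show ?case
    by (simp add: p_def)
qed

lemma prod_diff_eq_qpoch_div_power:
  assumes "q \<noteq> 0" "y \<noteq> 0"
  shows "(\<Prod>i<M. u - q / y * q ^ i) = (\<Prod>i<M. - (q / y * q ^ i)) * qpoch (y / q ^ M * u) q M"
proof -
  have "u * q / (q / y * q ^ M) = y / q ^ M * u"
    using assms by (simp add: field_simps)
  moreover have "(\<Prod>i<M. u - q / y * q ^ i) =
      (\<Prod>i<M. - (q / y * q ^ i)) * qpoch (u * q / (q / y * q ^ M)) q M"
    by (rule prod_diff_eq_qpoch_reverse) (use assms in simp_all)
  ultimately show ?thesis
    by simp
qed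

lemma qpoch_quotient_mult_prod_diff:
  assumes "q \<noteq> 0" "y \<noteq> 0" "qpoch y q n \<noteq> 0" "k \<le> n"
  shows "qpoch y q n / qpoch y q k * (\<Prod>i<M. q ^ k - q / y * q ^ i) =
    (\<Prod>i<M. - (q / y * q ^ i)) * qpoch (y / q ^ M * q ^ n) q M * qpoch (y / q ^ M * q ^ k) q (n - k)"
proof -
  define c where "c = y / q ^ M"
  have split: "qpoch y q n = qpoch y q k * qpoch (y * q ^ k) q (n - k)"
    using qpoch_add[of y q k "n - k"] assms(4) by simp
  have "qpoch (c * q ^ k) q M * qpoch (y * q ^ k) q (n - k) = qpoch (c * q ^ k) q (M + (n - k))"
    using assms(1) by (simp add: qpoch_add c_def field_simps)
  also have "\<dots> = qpoch (c * q ^ k) q (n - k) * qpoch (c * q ^ n) q M"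
  proof -
    have "c * q ^ k * q ^ (n - k) = c * q ^ n"
      using assms(4) by (simp add: mult.assoc power_add[symmetric])
    then show ?thesis
      using qpoch_add[of "c * q ^ k" q "n - k" M] by (simp only: add.commute)
  qed
  finally show ?thesis
    using split prod_diff_eq_qpoch_div_power[OF assms(1,2), where M=M and u="q ^ k"] assms(3)
    unfolding c_def by (auto simp: field_simps)
qed

lemma qchu_sum_prod_diff:
  assumes "q \<noteq> 0" "\<And>k. qpoch q q k \<noteq> 0" "x \<noteq> 0" "y \<noteq> 0" "qpoch y q n \<noteq> 0"
    and "qpoch (x * (q / q ^ n) / y) q M \<noteq> 0"
  shows "(\<Sum>k\<le>n. qchu_coeff q n k * qpoch x q k / qpoch y q k * (\<Prod>i<M. q ^ k - q / y * q ^ i)) =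
    x ^ n * qpoch (y / x) q n / qpoch y q n *
    (qpoch (q / q ^ n / y) q M * qpoch (q * x / y) q M / qpoch (x * (q / q ^ n) / y) q M)"
proof -
  define c where "c = y / q ^ M"
  define K where "K = (\<Prod>i<M. - (q / y * q ^ i))"
  have "qpoch y q n * (\<Sum>k\<le>n. qchu_coeff q n k * qpoch x q k / qpoch y q k * (\<Prod>i<M. q ^ k - q / y * q ^ i)) =
      K * qpoch (c * q ^ n) q M * (\<Sum>k\<le>n. qchu_coeff q n k * qpoch x q k * qpoch (c * q ^ k) q (n - k))"
    unfolding sum_distrib_left
    by (intro sum.cong refl)
      (use qpoch_quotient_mult_prod_diff[OF assms(1,4,5)] in \<open>simp add: c_def K_def divide_inverse mult_ac\<close>)
  also have "\<dots> = K * qpoch (c * q ^ n) q M * (\<Prod>i<n. x - c * q ^ i)"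
    by (simp only: q_Chu_Vandermonde[OF assms(1,2)])
  also have "K * qpoch (c * q ^ n) q M = (q ^ n) ^ M * qpoch (q / q ^ n / y) q M"
    using power_mult_qpoch[of "q ^ n" M "q / y" q] prod_diff_eq_qpoch_div_power[OF assms(1,4), where M=M and u="q ^ n"]
      assms(1) by (simp add: K_def c_def ac_simps)
  finally have "qpoch y q n * qpoch (x * (q / q ^ n) / y) q M *
      (\<Sum>k\<le>n. qchu_coeff q n k * qpoch x q k / qpoch y q k * (\<Prod>i<M. q ^ k - q / y * q ^ i)) =
      qpoch (q / q ^ n / y) q M * ((q ^ n) ^ M * (\<Prod>i<n. x - c * q ^ i) * qpoch (x * (q / q ^ n) / y) q M)"
    by (simp add: mult_ac)
  also have "\<dots> = qpoch (q / q ^ n / y) q M * qpoch (q * x / y) q M * (x ^ n * qpoch (y / x) q n)"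
    unfolding c_def prod_diff_qpoch_shift[OF assms(1,4)] power_mult_qpoch[OF assms(3)] by (simp add: mult_ac)
  finally show ?thesis
    using assms(5,6) by (simp add: field_simps)
qed

lemma phi21_terminating:
  assumes "q \<noteq> 0"
  shows "phi21 (inverse (q ^ n)) a b q (q * z) =
    (\<Sum>k\<le>n. qchu_coeff q n k * qpoch a q k / qpoch b q k * z ^ k)"
proof -
  have "phi21 (inverse (q ^ n)) a b q (q * z) =
      (\<Sum>k\<le>n. qpoch (inverse (q ^ n)) q k * qpoch a q k / qpoch b q k * (q * z) ^ k / qpoch q q k)"
    unfolding phi21_def by (rule suminf_finite) (auto simp: qpoch_inverse_power_eq_0 assms)
  then show ?thesis
    by (simp add: qchu_coeff_def power_mult_distrib divide_inverse mult_ac)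
qed

lemma phi21_terminating_qpower_eq:
  assumes "q \<noteq> 0" "\<And>k. qpoch q q k \<noteq> 0" "x \<noteq> 0" "y \<noteq> 0" "qpoch y q n \<noteq> 0"
    and "\<And>j. j \<le> m \<Longrightarrow> qpoch (x * (q / q ^ n) / y) q (m - j) \<noteq> 0"
  shows "phi21 (inverse (q ^ n)) x y q (q ^ (1 + m)) =
    x ^ n * qpoch (y / x) q n / qpoch y q n *
    (\<Sum>j\<le>m. qbinom q m j * (qpoch (q / q ^ n / y) q (m - j) * qpoch (q * x / y) q (m - j)) /
      qpoch (x * (q / q ^ n) / y) q (m - j) * (q / y) ^ j)"
proof -
  define P where "P = x ^ n * qpoch (y / x) q n / qpoch y q n"
  define T where "T M = qpoch (q / q ^ n / y) q M * qpoch (q * x / y) q M / qpoch (x * (q / q ^ n) / y) q M"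
    for M
  define S where "S M = (\<Sum>k\<le>n. qchu_coeff q n k * qpoch x q k / qpoch y q k * (\<Prod>i<M. q ^ k - q / y * q ^ i))"
    for M
  have "phi21 (inverse (q ^ n)) x y q (q ^ (1 + m)) =
      (\<Sum>k\<le>n. qchu_coeff q n k * qpoch x q k / qpoch y q k * (q ^ k) ^ m)"
    using phi21_terminating[OF assms(1), of n x y "q ^ m"] by (simp add: power_mult[symmetric] mult.commute)
  also have "\<dots> = (\<Sum>k\<le>n. \<Sum>j\<le>m. qbinom q m j * (q / y) ^ j *
      (qchu_coeff q n k * qpoch x q k / qpoch y q k * (\<Prod>i<m - j. q ^ k - q / y * q ^ i)))"
    by (subst power_qbinomial_expansion[OF assms(2), where t="q / y" and m=m]) (simp add: sum_distrib_left mult_ac)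
  also have "\<dots> = (\<Sum>j\<le>m. qbinom q m j * (q / y) ^ j * S (m - j))"
    by (subst sum.swap) (simp add: S_def sum_distrib_left)
  also have "\<dots> = (\<Sum>j\<le>m. qbinom q m j * (q / y) ^ j * (P * T (m - j)))"
    using qchu_sum_prod_diff[OF assms(1-5) assms(6)] by (intro sum.cong refl) (simp add: S_def P_def T_def)
  finally show ?thesis
    by (simp add: P_def T_def sum_distrib_left mult_ac)
qed

theorem theorem5:
  fixes q :: real and n m :: nat and x y :: complex
  assumes "0 < q" "q < 1"
    and "y \<noteq> 0" and "x \<noteq> 0"
    and "qpoch y (of_real q) n \<noteq> 0"
    and "\<forall>j\<le>m. qpoch (x * of_real q powi (1 - int n) / y) (of_real q) (m - j) \<noteq> 0"
  shows "phi21 (of_real q powi (- int n)) x y (of_real q) (of_real q ^ (1 + m)) =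
    x ^ n * qpoch (y / x) (of_real q) n / qpoch y (of_real q) n *
    (\<Sum>j\<le>m. qbinom (of_real q) m j *
       (qpoch (of_real q powi (1 - int n) / y) (of_real q) (m - j) *
        qpoch (of_real q * x / y) (of_real q) (m - j)) /
       qpoch (x * of_real q powi (1 - int n) / y) (of_real q) (m - j) *
       (of_real q / y) ^ j)"
proof -
  define Q where "Q = complex_of_real q"
  have Q: "Q \<noteq> 0"
    using assms(1) by (simp add: Q_def)
  have "qpoch Q Q k \<noteq> 0" for k
    using qpoch_self_nonzero assms(1,2) by (simp add: Q_def)
  moreover have powi: "Q powi (- int n) = inverse (Q ^ n)" "Q powi (1 - int n) = Q / Q ^ n"
    using Q by (simp_all add: power_int_minus power_int_diff)
  ultimately show ?thesis
    using phi21_terminating_qpower_eq[OF Q _ assms(4,3) assms(5)[folded Q_def]] assms(6)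
    unfolding Q_def[symmetric] powi by blast

qed

end
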